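(* Let $n\ge1$, $R>0$, and let $K\subset\mathbb{R}^{n+1}=\mathbb{R}^n\times\mathbb{R}$ be the closed ball of radius $R$ centered at the origin. Let $G\colon\mathbb{R}^n\to\mathbb{R}$ be twice continuously differentiable with $|x|^2+G(x)^2>0$ for all $x$, and define $h\colon\mathbb{R}^n\to\mathbb{R}^n$ by $$h(x)=x-\frac{\sqrt{|x|^2+G(x)^2}-R}{\sqrt{|x|^2+G(x)^2}}\left(x+2\,\frac{G(x)-\langle x,\nabla G(x)\rangle}{1+|\nabla G(x)|^2}\,\nabla G(x)\right).$$ Suppose $h$ is a bijection from $\mathbb{R}^n$ onto an open set $J\subset\mathbb{R}^n$ containing $0$, with nowhere vanishing derivative (Jacobian). Then $G$ is an equidistant function (i.e. there is an admissible $f$ such that the equidistant set of $K$ and the epigraph of $f$ is the graph of $G$) if and only if the pair $x(t):=h^{-1}(t)$, $y(t):=G(x(t))$ ($t\in J$) is the equidistant parameterization for the graph of $G$, i.e. there is an admissible $f$ with $D_f=J$ and $x=x_f$, $y=y_f$ on $J$.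
   Context: $d(p,A)=\inf\{|p-q|\mid q\in A\}$ (Euclidean distance). A function $f\colon\mathbb{R}^n\to(0,\infty)$ is admissible if it is twice continuously differentiable, convex, and $|t|^2+f(t)^2>R^2$ for all $t$; its epigraph is $L_f=\{(t,y)\mid f(t)\le y\}$ and the equidistant set is $\{K=L_f\}=\{p\mid d(p,K)=d(p,L_f)\}$. For admissible $f$ put $\alpha_f(t)=\frac{\langle t,\nabla f(t)\rangle-f(t)}{\sqrt{1+|\nabla f(t)|^2}}$, $D_f=\{t\mid\alpha_f(t)<R\}$, and the equidistant parameterization $x_f\colon D_f\to\mathbb{R}^n$, $y_f\colon D_f\to\mathbb{R}$, $x_f(t)=t+\frac{1}{2\sqrt{1+|\nabla f(t)|^2}}\cdot\frac{|t|^2+f(t)^2-R^2}{R-\alpha_f(t)}\nabla f(t)$, $y_f(t)=f(t)-\frac{1}{2\sqrt{1+|\nabla f(t)|^2}}\cdot\frac{|t|^2+f(t)^2-R^2}{R-\alpha_f(t)}$. *)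

theory Defs
  imports "HOL-Analysis.Analysis"
begin

text \<open>Points of R^n are vectors real^'n; R^(n+1) = R^n x R is the product type,
whose norm is the Euclidean one.\<close>

definition grad :: "(real^'n \<Rightarrow> real) \<Rightarrow> real^'n \<Rightarrow> real^'n" where
  "grad f x = (SOME v. (f has_derivative (\<lambda>h. v \<bullet> h)) (at x))"

definition C2 :: "(real^'n \<Rightarrow> real) \<Rightarrow> bool" where
  "C2 f \<longleftrightarrow> (\<forall>x. f differentiable (at x)) \<and>
     (\<exists>D2 :: real^'n \<Rightarrow> ((real^'n) \<Rightarrow>\<^sub>L (real^'n)).
        (\<forall>x. (grad f has_derivative blinfun_apply (D2 x)) (at x)) \<and> continuous_on UNIV D2)"

definition admissible :: "real \<Rightarrow> (real^'n \<Rightarrow> real) \<Rightarrow> bool" where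
  "admissible R f \<longleftrightarrow> C2 f \<and> convex_on UNIV f \<and> (\<forall>t. f t > 0) \<and>
     (\<forall>t. norm t ^ 2 + (f t) ^ 2 > R ^ 2)"

definition epigraph :: "(real^'n \<Rightarrow> real) \<Rightarrow> ((real^'n) \<times> real) set" where
  "epigraph f = {(t, y). f t \<le> y}"

definition equidistant_set :: "((real^'n) \<times> real) set \<Rightarrow> ((real^'n) \<times> real) set \<Rightarrow> ((real^'n) \<times> real) set" where
  "equidistant_set K L = {p. infdist p K = infdist p L}"

definition alpha_f :: "(real^'n \<Rightarrow> real) \<Rightarrow> real^'n \<Rightarrow> real" where
  "alpha_f f t = (t \<bullet> grad f t - f t) / sqrt (1 + norm (grad f t) ^ 2)"

definition D_f :: "real \<Rightarrow> (real^'n \<Rightarrow> real) \<Rightarrow> (real^'n) set" where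
  "D_f R f = {t. alpha_f f t < R}"

definition x_f :: "real \<Rightarrow> (real^'n \<Rightarrow> real) \<Rightarrow> real^'n \<Rightarrow> real^'n" where
  "x_f R f t = t + ((1 / (2 * sqrt (1 + norm (grad f t) ^ 2))) *
      ((norm t ^ 2 + f t ^ 2 - R ^ 2) / (R - alpha_f f t))) *\<^sub>R grad f t"

definition y_f :: "real \<Rightarrow> (real^'n \<Rightarrow> real) \<Rightarrow> real^'n \<Rightarrow> real" where
  "y_f R f t = f t - (1 / (2 * sqrt (1 + norm (grad f t) ^ 2))) *
      ((norm t ^ 2 + f t ^ 2 - R ^ 2) / (R - alpha_f f t))"

definition hmap :: "real \<Rightarrow> (real^'n \<Rightarrow> real) \<Rightarrow> real^'n \<Rightarrow> real^'n" where
  "hmap R G x = x - ((sqrt (norm x ^ 2 + G x ^ 2) - R) / sqrt (norm x ^ 2 + G x ^ 2)) *\<^sub>R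
      (x + (2 * (G x - x \<bullet> grad G x) / (1 + norm (grad G x) ^ 2)) *\<^sub>R grad G x)"

end

(*
  For admissible f, a point p of the equidistant set lies outside the epigraph L of f, and its
  closest point in L lies on the graph, say at (t, f t); the first-order condition puts p on the
  outer normal ray p = (t, f t) + mu (grad f t, -1), mu >= 0.  Conversely, by convexity (t, f t)
  is the closest point of L to every point of this ray, so d(p, L) = mu sqrt (1 + |grad f t|^2),
  while d(p, K) = |p| - R.  Equating the two shows that the normal ray at t meets the
  equidistant set exactly when t is in D_f, at mu = mu_f R f t, i.e. at (x_f t, y_f t): the
  equidistant set is the image of D_f under the equidistant parameterization.

  If that set is the graph of G, then every point z of the graph satisfies
  |z| - |z - (t, f t)| <= R, with equality at z = (x_f t, G (x_f t)).  So the graph touches the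
  hyperboloid sheet with foci 0 and (t, f t) there, and the unit vectors pointing away from the
  two foci are mirror images of each other in the tangent hyperplane of the graph; solving for
  t gives t = h (x_f t).  Hence D_f = h(R^n) = J and x_f = h^-1 on J.  Conversely, a
  parameterization by h^-1 and G o h^-1 on J = D_f sweeps out exactly the graph of G.
*)

theory Submission
  imports Defs
begin

lemma has_derivative_grad:
  fixes f :: "real^'n \<Rightarrow> real"
  assumes "f differentiable (at x)"
  shows "(f has_derivative (\<lambda>h. grad f x \<bullet> h)) (at x)"
proof -
  obtain D where D: "(f has_derivative D) (at x)"
    using assms differentiable_def by blast
  have "D = (\<lambda>h. adjoint D 1 \<bullet> h)"
    using adjoint_works[OF has_derivative_linear[OF D], of _ 1] by (auto simp: inner_commute)
  with D have "\<exists>v. (f has_derivative (\<lambda>h. v \<bullet> h)) (at x)" by metis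
  then show ?thesis unfolding grad_def by (rule someI_ex)
qed

lemma C2_has_derivative_grad: "C2 f \<Longrightarrow> (f has_derivative (\<lambda>h. grad f x \<bullet> h)) (at x)"
  unfolding C2_def using has_derivative_grad by blast

lemma C2_imp_continuous_on: "C2 f \<Longrightarrow> continuous_on UNIV f"
  unfolding C2_def
  using differentiable_imp_continuous_within continuous_at_imp_continuous_on by blast

lemma convex_on_imp_above_tangent_plane:
  fixes f :: "'a::real_normed_vector \<Rightarrow> real"
  assumes convex: "convex_on UNIV f" and deriv: "(f has_derivative f') (at t)"
  shows "f t + f' (s - t) \<le> f s"
proof -
  define k where "k = (\<lambda>\<theta>::real. f (t + \<theta> *\<^sub>R (s - t)))"
  have "convex_on UNIV k"
  proof (rule convex_onI)
    fix \<tau> a b :: real assume "0 < \<tau>" "\<tau> < 1"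
    have "t + ((1 - \<tau>) *\<^sub>R a + \<tau> *\<^sub>R b) *\<^sub>R (s - t)
        = (1 - \<tau>) *\<^sub>R (t + a *\<^sub>R (s - t)) + \<tau> *\<^sub>R (t + b *\<^sub>R (s - t))"
      by (simp add: algebra_simps)
    then show "k ((1 - \<tau>) *\<^sub>R a + \<tau> *\<^sub>R b) \<le> (1 - \<tau>) * k a + \<tau> * k b"
      unfolding k_def using convex_onD[OF convex, of \<tau>] \<open>0 < \<tau>\<close> \<open>\<tau> < 1\<close> by simp
  qed simp
  moreover have "(k has_field_derivative f' (s - t)) (at 0)"
  proof -
    have "((\<lambda>\<theta>::real. t + \<theta> *\<^sub>R (s - t)) has_derivative (\<lambda>\<theta>. \<theta> *\<^sub>R (s - t))) (at 0)"
      by (auto intro!: derivative_eq_intros)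
    from has_derivative_compose[OF this, of f f'] deriv
    have "(k has_derivative (\<lambda>\<theta>. f' (\<theta> *\<^sub>R (s - t)))) (at 0)"
      unfolding k_def by simp
    moreover have "(\<lambda>\<theta>. f' (\<theta> *\<^sub>R (s - t))) = (*) (f' (s - t))"
      using linear_scale[OF has_derivative_linear[OF deriv]] by (auto simp: fun_eq_iff)
    ultimately show ?thesis unfolding has_field_derivative_def by simp
  qed
  ultimately have "f' (s - t) * (1 - 0) \<le> k 1 - k 0"
    by (intro convex_on_imp_above_tangent[where A = UNIV]) auto
  then show ?thesis unfolding k_def by simp
qed

lemma norm_Pair_power2: "norm (a, b) ^ 2 = norm a ^ 2 + norm b ^ 2"
  by (simp add: norm_Pair)

lemma infdist_eq_dist_closest:
  assumes "q \<in> A" and "\<And>z. z \<in> A \<Longrightarrow> dist p q \<le> dist p z"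
  shows "infdist p A = dist p q"
proof (rule antisym)
  show "infdist p A \<le> dist p q" using assms(1) by (rule infdist_le)
  have "A \<noteq> {}" using assms(1) by blast
  then show "dist p q \<le> infdist p A"
    using assms(2) by (simp add: infdist_notempty cINF_greatest)
qed

lemma dist_le_dist_if_obtuse:
  fixes p q z :: "'a::real_inner"
  assumes "(p - q) \<bullet> (z - q) \<le> 0"
  shows "dist p q \<le> dist p z"
proof -
  have "norm (a - b) ^ 2 = norm a ^ 2 - 2 * (a \<bullet> b) + norm b ^ 2" for a b :: 'a
    by (simp add: power2_norm_eq_inner inner_diff_left inner_diff_right inner_commute)
  from this[of "p - q" "z - q"]
  have "norm (p - z) ^ 2 = norm (p - q) ^ 2 - 2 * ((p - q) \<bullet> (z - q)) + norm (z - q) ^ 2"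
    by simp
  then have "norm (p - q) ^ 2 \<le> norm (p - z) ^ 2"
    using assms zero_le_power2[of "norm (z - q)"] by linarith
  then show ?thesis unfolding dist_norm by (rule power2_le_imp_le) simp
qed

lemma infdist_cball_zero:
  fixes p :: "'a::real_normed_vector"
  assumes "0 \<le> R"
  shows "infdist p (cball 0 R) = max 0 (norm p - R)"
proof (cases "norm p \<le> R")
  case True
  then show ?thesis by simp
next
  case False
  then have "0 < norm p" using assms by linarith
  define a where "a = (R / norm p) *\<^sub>R p"
  have "a \<in> cball 0 R" using assms \<open>0 < norm p\<close> by (simp add: a_def)
  moreover have "dist p a = norm p - R"
  proof -
    have "p - a = (1 - R / norm p) *\<^sub>R p" by (simp add: a_def algebra_simps)
    then have "norm (p - a) = \<bar>1 - R / norm p\<bar> * norm p" by simp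
    also have "\<dots> = norm p - R" using False \<open>0 < norm p\<close> by (simp add: field_simps abs_if)
    finally show ?thesis by (simp add: dist_norm)
  qed
  moreover have "dist p a \<le> dist p z" if "z \<in> cball 0 R" for z
    using that norm_triangle_ineq2[of p z] \<open>dist p a = norm p - R\<close> by (simp add: dist_norm)
  ultimately have "infdist p (cball 0 R) = norm p - R"
    by (metis infdist_eq_dist_closest)
  then show ?thesis using False by simp
qed

section \<open>Nearest points of epigraphs\<close>

lemma closed_epigraph: "continuous_on UNIV f \<Longrightarrow> closed (epigraph f)"
proof -
  assume cont: "continuous_on UNIV f"
  have "epigraph f = {z. f (fst z) \<le> snd z}" by (auto simp: epigraph_def)
  moreover have "closed {z. f (fst z) \<le> snd z}"
    by (intro closed_Collect_le continuous_on_compose2[OF cont] continuous_intros) auto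
  ultimately show ?thesis by simp
qed

lemma strict_epigraph_subset_interior:
  assumes "continuous_on UNIV f"
  shows "{(t, y). f t < y} \<subseteq> interior (epigraph f)"
proof (rule interior_maximal)
  have "{(t, y). f t < y} = {z. f (fst z) < snd z}" by auto
  moreover have "open {z. f (fst z) < snd z}"
    by (intro open_Collect_less continuous_on_compose2[OF assms] continuous_intros) auto
  ultimately show "open {(t, y). f t < y}" by simp
qed (auto simp: epigraph_def)

lemma epigraph_closest_point_on_graph:
  fixes f :: "real^'n \<Rightarrow> real"
  assumes cont: "continuous_on UNIV f" and p: "p \<notin> epigraph f"
  obtains t where "\<And>z. z \<in> epigraph f \<Longrightarrow> dist p (t, f t) \<le> dist p z"
proof -
  let ?L = "epigraph f"
  have closed: "closed ?L" using cont by (rule closed_epigraph)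
  have nonempty: "?L \<noteq> {}" by (auto simp: epigraph_def)
  have "(0, f 0 + 1) \<in> interior ?L"
    using strict_epigraph_subset_interior[OF cont] by auto
  then have "interior ?L \<noteq> {}" by blast
  moreover have "p \<notin> interior ?L" using p interior_subset by blast
  ultimately have not_interior: "closest_point ?L p \<notin> interior ?L"
    using closest_point_in_rel_interior[OF closed nonempty, of p]
    by (simp add: rel_interior_nonempty_interior affine_hull_nonempty_interior)
  obtain t y where ty: "closest_point ?L p = (t, y)" by (cases "closest_point ?L p")
  have "(t, y) \<in> ?L" using closest_point_in_set[OF closed nonempty, of p] ty by simp
  then have "f t \<le> y" by (simp add: epigraph_def)
  moreover have "\<not> f t < y"
  proof
    assume "f t < y"
    then have "(t, y) \<in> interior ?L" using strict_epigraph_subset_interior[OF cont] by blast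
    with not_interior ty show False by simp
  qed
  ultimately have "closest_point ?L p = (t, f t)" using ty by simp
  show ?thesis
  proof (rule that)
    fix z assume "z \<in> ?L"
    from closest_point_le[OF closed this, of p] show "dist p (t, f t) \<le> dist p z"
      using \<open>closest_point ?L p = (t, f t)\<close> by simp
  qed
qed

lemma graph_closest_point_normal:
  fixes f :: "'a::real_inner \<Rightarrow> real"
  assumes deriv: "(f has_derivative (\<lambda>h. g \<bullet> h)) (at t)"
    and closest: "\<And>s. dist (a, b) (t, f t) \<le> dist (a, b) (s, f s)"
  shows "a - t = (f t - b) *\<^sub>R g"
proof -
  define \<phi> where "\<phi> = (\<lambda>s. (a - s) \<bullet> (a - s) + (b - f s) * (b - f s))"
  have "\<phi> s = dist (a, b) (s, f s) ^ 2" for s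
  proof -
    have "dist (a, b) (s, f s) ^ 2 = norm (a - s) ^ 2 + (b - f s) ^ 2"
      by (simp add: dist_norm norm_Pair)
    then show ?thesis
      by (simp add: \<phi>_def power2_norm_eq_inner[symmetric] power2_eq_square[symmetric])
  qed
  then have min: "\<forall>s\<in>UNIV. \<phi> t \<le> \<phi> s"
    using closest by (simp add: power_mono)
  have "(\<phi> has_derivative (\<lambda>v. - 2 * ((a - t) \<bullet> v) - 2 * (b - f t) * (g \<bullet> v))) (at t)"
    unfolding \<phi>_def
    by (rule derivative_eq_intros deriv refl | simp add: inner_commute algebra_simps)+
  from differential_zero_maxmin[where S = UNIV, OF _ _ this]
  have "(\<lambda>v. - 2 * ((a - t) \<bullet> v) - 2 * (b - f t) * (g \<bullet> v)) = (\<lambda>v. 0)"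
    using min by auto
  from fun_cong[OF this, of "(a - t) + (b - f t) *\<^sub>R g"]
  have "((a - t) + (b - f t) *\<^sub>R g) \<bullet> ((a - t) + (b - f t) *\<^sub>R g) = 0"
    by (simp add: inner_add_left algebra_simps)
  then have "(a - t) + (b - f t) *\<^sub>R g = 0" by (simp only: inner_eq_zero_iff)
  then show ?thesis by (simp add: algebra_simps)
qed

lemma graph_hyperboloid_contact_normal:
  fixes G :: "'a::real_inner \<Rightarrow> real"
  assumes deriv: "(G has_derivative (\<lambda>h. g \<bullet> h)) (at x)"
    and p: "p = (x, G x)" "p \<noteq> 0" "p \<noteq> q"
    and max: "\<And>x'. norm (x', G x') - norm ((x', G x') - q) \<le> norm p - norm (p - q)"
  shows "\<exists>c. sgn p - sgn (p - q) = c *\<^sub>R (g, -1)"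
proof -
  define \<psi> where "\<psi> = (\<lambda>x'. norm (x', G x') - norm ((x', G x') - q))"
  have graph: "((\<lambda>x'. (x', G x')) has_derivative (\<lambda>e. (e, g \<bullet> e))) (at x)"
    by (intro has_derivative_Pair has_derivative_ident deriv)
  have graph_q: "((\<lambda>x'. (x', G x') - q) has_derivative (\<lambda>e. (e, g \<bullet> e))) (at x)"
    using has_derivative_diff[OF graph has_derivative_const[of q]] by simp
  have "p - q \<noteq> 0" using \<open>p \<noteq> q\<close> by simp
  have "(\<psi> has_derivative (\<lambda>e. (e, g \<bullet> e) \<bullet> sgn p - (e, g \<bullet> e) \<bullet> sgn (p - q))) (at x)"
    unfolding \<psi>_def
    using has_derivative_compose[OF graph has_derivative_norm[OF \<open>p \<noteq> 0\<close>, unfolded p]]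
      has_derivative_compose[OF graph_q has_derivative_norm[OF \<open>p - q \<noteq> 0\<close>, unfolded p]]
    by (intro has_derivative_diff) (auto simp: p)
  from differential_zero_maxmin[where S = UNIV, OF _ _ this]
  have D0: "(\<lambda>e. (e, g \<bullet> e) \<bullet> sgn p - (e, g \<bullet> e) \<bullet> sgn (p - q)) = (\<lambda>e. 0)"
    using max by (auto simp: \<psi>_def p)
  have zero: "(e, g \<bullet> e) \<bullet> (sgn p - sgn (p - q)) = 0" for e
    using fun_cong[OF D0, of e] by (simp only: inner_diff_right)
  obtain u1 u2 where u: "sgn p - sgn (p - q) = (u1, u2)" by fastforce
  have "(u1 + u2 *\<^sub>R g) \<bullet> (u1 + u2 *\<^sub>R g) = 0"
    using zero[of "u1 + u2 *\<^sub>R g"] by (simp add: u inner_commute algebra_simps)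
  then have "sgn p - sgn (p - q) = (- u2) *\<^sub>R (g, -1)"
    by (simp add: u eq_neg_iff_add_eq_0)
  then show ?thesis by blast
qed

section \<open>The equidistant set as a parameterized surface\<close>

lemma admissible_epigraph_norm_gt:
  assumes "admissible R f" and "z \<in> epigraph f"
  shows "R < norm z"
proof -
  obtain t y where z: "z = (t, y)" and "f t \<le> y"
    using assms(2) by (auto simp: epigraph_def)
  moreover have "0 < f t" and "R ^ 2 < norm t ^ 2 + f t ^ 2"
    using assms(1) by (auto simp: admissible_def)
  moreover have "f t ^ 2 \<le> y ^ 2" using \<open>f t \<le> y\<close> \<open>0 < f t\<close> by (simp add: power_mono)
  moreover have "norm z ^ 2 = norm t ^ 2 + y ^ 2" by (simp add: z norm_Pair_power2)
  ultimately have "R ^ 2 < norm z ^ 2" by linarith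
  then show ?thesis by (rule power2_less_imp_less) simp
qed

lemma equidistant_set_disjoint_epigraph:
  assumes "admissible R f" "0 < R" and p: "p \<in> equidistant_set (cball 0 R) (epigraph f)"
  shows "p \<notin> epigraph f"
proof
  assume "p \<in> epigraph f"
  then have "infdist p (cball 0 R) = 0" using p by (simp add: equidistant_set_def)
  then have "norm p \<le> R" using \<open>0 < R\<close> by (simp add: infdist_cball_zero)
  with admissible_epigraph_norm_gt[OF assms(1) \<open>p \<in> epigraph f\<close>] show False by simp
qed

lemma epigraph_exterior_point_on_normal_ray:
  fixes f :: "real^'n \<Rightarrow> real"
  assumes "C2 f" and p: "p \<notin> epigraph f"
  obtains t \<mu> where "0 \<le> \<mu>" and "p = (t + \<mu> *\<^sub>R grad f t, f t - \<mu>)"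
proof -
  obtain t where closest: "\<And>z. z \<in> epigraph f \<Longrightarrow> dist p (t, f t) \<le> dist p z"
    using epigraph_closest_point_on_graph[OF C2_imp_continuous_on[OF \<open>C2 f\<close>] p] by blast
  obtain a b where ab: "p = (a, b)" by (cases p)
  have "a - t = (f t - b) *\<^sub>R grad f t"
    using closest by (intro graph_closest_point_normal[OF C2_has_derivative_grad[OF \<open>C2 f\<close>]])
      (simp add: ab epigraph_def)
  moreover have "b \<le> f t"
  proof (rule ccontr)
    assume "\<not> b \<le> f t"
    then have "(t, b) \<in> epigraph f" by (simp add: epigraph_def)
    from closest[OF this] have "dist p (t, f t) ^ 2 \<le> dist p (t, b) ^ 2" by (simp add: power_mono)
    then have "(b - f t) ^ 2 \<le> 0" by (simp add: ab dist_norm norm_Pair_power2)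
    with \<open>\<not> b \<le> f t\<close> show False by simp
  qed
  ultimately show ?thesis using that[of "f t - b" t] by (simp add: ab algebra_simps)
qed

definition mu_f :: "real \<Rightarrow> (real^'n \<Rightarrow> real) \<Rightarrow> real^'n \<Rightarrow> real" where
  "mu_f R f t = (norm t ^ 2 + f t ^ 2 - R ^ 2) /
     (2 * sqrt (1 + norm (grad f t) ^ 2) * (R - alpha_f f t))"

lemma x_f_y_f_eq_normal_ray:
  "(x_f R f t, y_f R f t) = (t + mu_f R f t *\<^sub>R grad f t, f t - mu_f R f t)"
  unfolding x_f_def y_f_def mu_f_def by (simp add: field_simps)

lemma mu_f_pos:
  assumes "admissible R f" and "t \<in> D_f R f"
  shows "0 < mu_f R f t"
  using assms unfolding admissible_def D_f_def mu_f_def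
  by (intro divide_pos_pos mult_pos_pos) (auto simp: add_pos_nonneg)

lemma dist_normal_ray:
  fixes t g :: "'a::real_inner"
  shows "dist (t + \<mu> *\<^sub>R g, y - \<mu>) (t, y) = \<bar>\<mu>\<bar> * sqrt (1 + norm g ^ 2)"
proof -
  have "dist (t + \<mu> *\<^sub>R g, y - \<mu>) (t, y) = sqrt (\<mu> ^ 2 * (1 + norm g ^ 2))"
    by (simp add: dist_norm norm_Pair power_mult_distrib algebra_simps)
  then show ?thesis by (simp add: real_sqrt_mult)
qed

lemma norm_normal_ray_sq:
  fixes t g :: "'a::real_inner"
  shows "norm (t + \<mu> *\<^sub>R g, y - \<mu>) ^ 2
    = norm t ^ 2 + y ^ 2 + 2 * \<mu> * (t \<bullet> g - y) + \<mu> ^ 2 * (1 + norm g ^ 2)"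
proof -
  have "norm (t + \<mu> *\<^sub>R g) ^ 2 = norm t ^ 2 + 2 * \<mu> * (t \<bullet> g) + \<mu> ^ 2 * norm g ^ 2"
    by (simp only: power2_norm_eq_inner inner_add_left inner_add_right inner_scaleR_left
        inner_scaleR_right) (simp add: inner_commute power2_eq_square algebra_simps)
  then show ?thesis
    by (simp only: norm_Pair_power2 real_norm_def power2_abs) (simp add: power2_eq_square algebra_simps)
qed

lemma infdist_epigraph_normal_ray:
  fixes f :: "real^'n \<Rightarrow> real"
  assumes convex: "convex_on UNIV f" and deriv: "(f has_derivative (\<lambda>h. g \<bullet> h)) (at t)"
    and "0 \<le> \<mu>"
  shows "infdist (t + \<mu> *\<^sub>R g, f t - \<mu>) (epigraph f) = dist (t + \<mu> *\<^sub>R g, f t - \<mu>) (t, f t)"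
proof (rule infdist_eq_dist_closest)
  let ?p = "(t + \<mu> *\<^sub>R g, f t - \<mu>)" and ?q = "(t, f t)"
  show "?q \<in> epigraph f" by (simp add: epigraph_def)
  fix z assume "z \<in> epigraph f"
  then obtain s y where z: "z = (s, y)" and "f s \<le> y" by (auto simp: epigraph_def)
  have "(?p - ?q) \<bullet> (z - ?q) = \<mu> * (g \<bullet> (s - t) - (y - f t))"
    by (simp add: z algebra_simps)
  also have "\<dots> \<le> 0"
    using convex_on_imp_above_tangent_plane[OF convex deriv, of s] \<open>f s \<le> y\<close> \<open>0 \<le> \<mu>\<close>
    by (intro mult_nonneg_nonpos) auto
  finally show "dist ?p ?q \<le> dist ?p z" by (rule dist_le_dist_if_obtuse)
qed

lemma normal_ray_mem_equidistant_set_iff_norm: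
  fixes f :: "real^'n \<Rightarrow> real"
  assumes adm: "admissible R f" and "0 < R" and "0 \<le> \<mu>"
  shows "(t + \<mu> *\<^sub>R grad f t, f t - \<mu>) \<in> equidistant_set (cball 0 R) (epigraph f)
    \<longleftrightarrow> norm (t + \<mu> *\<^sub>R grad f t, f t - \<mu>) = R + \<mu> * sqrt (1 + norm (grad f t) ^ 2)"
    (is "?p \<in> _ \<longleftrightarrow> _ = R + ?d")
proof -
  have "0 \<le> ?d" using \<open>0 \<le> \<mu>\<close> by simp
  have "convex_on UNIV f" and "C2 f" using adm by (auto simp: admissible_def)
  then have "infdist ?p (epigraph f) = ?d"
    using infdist_epigraph_normal_ray[OF _ C2_has_derivative_grad \<open>0 \<le> \<mu>\<close>] \<open>0 \<le> \<mu>\<close>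
    by (simp add: dist_normal_ray)
  then have "?p \<in> equidistant_set (cball 0 R) (epigraph f) \<longleftrightarrow> max 0 (norm ?p - R) = ?d"
    using \<open>0 < R\<close> by (simp add: equidistant_set_def infdist_cball_zero)
  also have "\<dots> \<longleftrightarrow> norm ?p = R + ?d"
  proof
    assume max: "max 0 (norm ?p - R) = ?d"
    have "R < norm ?p"
    proof (cases "\<mu> = 0")
      case True
      then show ?thesis
        using admissible_epigraph_norm_gt[OF adm, of ?p] by (simp add: epigraph_def)
    next
      case False
      then have "0 < ?d" using \<open>0 \<le> \<mu>\<close> by (simp add: add_pos_nonneg)
      with max show ?thesis by (simp add: max_def split: if_splits)
    qed
    with max show "norm ?p = R + ?d" by simp
  qed (use \<open>0 \<le> ?d\<close> in simp)
  finally show ?thesis .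
qed

lemma normal_ray_mem_equidistant_set_iff:
  fixes f :: "real^'n \<Rightarrow> real"
  assumes adm: "admissible R f" and "0 < R" and "0 \<le> \<mu>"
  shows "(t + \<mu> *\<^sub>R grad f t, f t - \<mu>) \<in> equidistant_set (cball 0 R) (epigraph f)
    \<longleftrightarrow> t \<in> D_f R f \<and> \<mu> = mu_f R f t"
proof -
  let ?g = "grad f t" and ?p = "(t + \<mu> *\<^sub>R grad f t, f t - \<mu>)" and ?\<alpha> = "alpha_f f t"
  define w where "w = sqrt (1 + norm ?g ^ 2)"
  define N where "N = norm t ^ 2 + f t ^ 2 - R ^ 2"
  have "0 < w" by (simp add: w_def add_pos_nonneg)
  have "0 < N" using adm by (simp add: N_def admissible_def)
  have "0 \<le> \<mu> * w" using \<open>0 \<le> \<mu>\<close> \<open>0 < w\<close> by simp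
  have "?\<alpha> * w = t \<bullet> ?g - f t" using \<open>0 < w\<close> by (simp add: alpha_f_def w_def[symmetric])
  then have "t \<bullet> ?g - f t = w * ?\<alpha>" by (simp add: mult.commute)
  moreover have "1 + norm ?g ^ 2 = w ^ 2" by (simp add: w_def)
  ultimately have norm_p: "norm ?p ^ 2 = R ^ 2 + N + 2 * (\<mu> * w) * ?\<alpha> + (\<mu> * w) ^ 2"
    unfolding norm_normal_ray_sq by (simp add: N_def power_mult_distrib algebra_simps)
  have "?p \<in> equidistant_set (cball 0 R) (epigraph f) \<longleftrightarrow> norm ?p ^ 2 = (R + \<mu> * w) ^ 2"
    using normal_ray_mem_equidistant_set_iff_norm[OF assms] \<open>0 < R\<close> \<open>0 \<le> \<mu> * w\<close>
    by (simp add: power2_eq_iff_nonneg w_def)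
  also have "\<dots> \<longleftrightarrow> N = 2 * (\<mu> * w) * (R - ?\<alpha>)"
    unfolding norm_p by (simp add: power2_eq_square algebra_simps)
  also have "\<dots> \<longleftrightarrow> 0 < R - ?\<alpha> \<and> \<mu> = N / (2 * w * (R - ?\<alpha>))"
  proof
    assume N: "N = 2 * (\<mu> * w) * (R - ?\<alpha>)"
    then have "0 < R - ?\<alpha>" using \<open>0 < N\<close> \<open>0 \<le> \<mu> * w\<close> by (simp add: zero_less_mult_iff)
    with N \<open>0 < w\<close> show "0 < R - ?\<alpha> \<and> \<mu> = N / (2 * w * (R - ?\<alpha>))" by (simp add: field_simps)
  qed (use \<open>0 < w\<close> in \<open>simp add: field_simps\<close>)
  finally show ?thesis by (simp add: D_f_def mu_f_def N_def w_def)
qed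

lemma x_f_y_f_mem_equidistant_set:
  assumes "admissible R f" and "0 < R" and "t \<in> D_f R f"
  shows "(x_f R f t, y_f R f t) \<in> equidistant_set (cball 0 R) (epigraph f)"
  using normal_ray_mem_equidistant_set_iff[OF assms(1,2), of "mu_f R f t" t]
    mu_f_pos[OF assms(1,3)] assms(3)
  by (simp add: x_f_y_f_eq_normal_ray)

lemma equidistant_set_eq_image_x_f_y_f:
  assumes adm: "admissible R f" and "0 < R"
  shows "equidistant_set (cball 0 R) (epigraph f) = (\<lambda>t. (x_f R f t, y_f R f t)) ` D_f R f"
proof (intro equalityI subsetI)
  fix p assume p: "p \<in> equidistant_set (cball 0 R) (epigraph f)"
  obtain t \<mu> where "0 \<le> \<mu>" and ray: "p = (t + \<mu> *\<^sub>R grad f t, f t - \<mu>)"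
    using epigraph_exterior_point_on_normal_ray adm equidistant_set_disjoint_epigraph[OF adm \<open>0 < R\<close> p]
    by (metis admissible_def)
  then have "t \<in> D_f R f \<and> \<mu> = mu_f R f t"
    using normal_ray_mem_equidistant_set_iff[OF adm \<open>0 < R\<close>] p by simp
  with ray show "p \<in> (\<lambda>t. (x_f R f t, y_f R f t)) ` D_f R f"
    by (auto simp: x_f_y_f_eq_normal_ray)
qed (use x_f_y_f_mem_equidistant_set[OF adm \<open>0 < R\<close>] in auto)

section \<open>Tangency with a hyperboloid and the map h\<close>

lemma norm_diff_scaleR_eq_norm:
  fixes a n :: "'a::real_inner"
  assumes "norm (a - c *\<^sub>R n) = norm a" and "n \<noteq> 0"
  shows "c = 0 \<or> c = 2 * (a \<bullet> n) / (n \<bullet> n)"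
proof -
  have "(a - c *\<^sub>R n) \<bullet> (a - c *\<^sub>R n) = a \<bullet> a" using assms(1) by (simp add: norm_eq)
  then have "c * (c * (n \<bullet> n) - 2 * (a \<bullet> n)) = 0"
    by (simp add: inner_diff_left inner_diff_right inner_commute algebra_simps)
  then show ?thesis using assms(2) by (auto simp: field_simps)
qed

lemma hyperboloid_contact_reflection:
  fixes p q n :: "'a::real_inner"
  assumes "0 < R" and "norm q \<noteq> R" and contact: "norm p - norm (p - q) = R"
    and "n \<noteq> 0" and sgn_pq: "sgn (p - q) = sgn p - c *\<^sub>R n"
  shows "c = 2 * (sgn p \<bullet> n) / (n \<bullet> n)"
proof -
  have "p \<noteq> q" using contact \<open>norm q \<noteq> R\<close> by auto
  then have "0 < norm (p - q)" by simp
  then have "0 < norm p" using contact \<open>0 < R\<close> by linarith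
  have "c \<noteq> 0"
  proof
    assume "c = 0"
    then have same_sgn: "sgn (p - q) = sgn p" using sgn_pq by (simp only: scaleR_zero_left diff_zero)
    have "p - q = norm (p - q) *\<^sub>R sgn (p - q)"
      using \<open>0 < norm (p - q)\<close> by (simp add: sgn_div_norm)
    then have "q = p - norm (p - q) *\<^sub>R sgn p" unfolding same_sgn by (simp add: algebra_simps)
    also have "\<dots> = (1 - norm (p - q) / norm p) *\<^sub>R p"
      by (simp add: sgn_div_norm divide_inverse algebra_simps)
    also have "1 - norm (p - q) / norm p = R / norm p"
      using contact \<open>0 < norm p\<close> by (simp add: field_simps)
    finally have "norm q = R" using \<open>0 < R\<close> \<open>0 < norm p\<close> by simp
    with \<open>norm q \<noteq> R\<close> show False ..
  qed
  moreover have "norm (sgn p - c *\<^sub>R n) = norm (sgn p)"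
    unfolding sgn_pq[symmetric] using \<open>0 < norm p\<close> \<open>p \<noteq> q\<close> by (simp add: norm_sgn)
  ultimately show ?thesis using norm_diff_scaleR_eq_norm \<open>n \<noteq> 0\<close> by blast
qed

lemma hmap_eq_at_hyperboloid_contact:
  fixes G :: "real^'n \<Rightarrow> real"
  assumes "0 < R" and "G differentiable (at x)" and "norm q \<noteq> R"
    and below: "\<And>x'. norm (x', G x') - norm ((x', G x') - q) \<le> R"
    and contact: "norm (x, G x) - norm ((x, G x) - q) = R"
  shows "hmap R G x = fst q"
proof -
  define p where "p = (x, G x)"
  let ?g = "grad G x" and ?n = "(grad G x, -1 :: real)"
  define \<rho> where "\<rho> = norm p"
  define \<delta> where "\<delta> = norm (p - q)"
  have \<rho>: "\<rho> = R + \<delta>" using contact by (simp add: \<rho>_def \<delta>_def p_def)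
  have "p \<noteq> q" using contact \<open>norm q \<noteq> R\<close> by (auto simp: p_def)
  then have "0 < \<delta>" by (simp add: \<delta>_def)
  then have "0 < \<rho>" using \<rho> \<open>0 < R\<close> by simp
  then have "p \<noteq> 0" by (auto simp: \<rho>_def)
  obtain c where "sgn p - sgn (p - q) = c *\<^sub>R ?n"
    using graph_hyperboloid_contact_normal[OF has_derivative_grad[OF assms(2)] p_def \<open>p \<noteq> 0\<close> \<open>p \<noteq> q\<close>]
      below contact by (auto simp: p_def)
  then have sgn_pq: "sgn (p - q) = sgn p - c *\<^sub>R ?n" by (simp add: algebra_simps)
  have "?n \<noteq> 0" by (simp add: zero_prod_def)
  from hyperboloid_contact_reflection[OF \<open>0 < R\<close> \<open>norm q \<noteq> R\<close> _ this sgn_pq] contact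
  have "c = 2 * (sgn p \<bullet> ?n) / (?n \<bullet> ?n)" by (simp add: p_def)
  moreover have "?n \<bullet> ?n = 1 + norm ?g ^ 2" by (simp add: power2_norm_eq_inner)
  moreover have "sgn p \<bullet> ?n = (x \<bullet> ?g - G x) / \<rho>"
    by (simp add: sgn_div_norm p_def \<rho>_def divide_inverse algebra_simps)
  ultimately have "c = 2 * ((x \<bullet> ?g - G x) / \<rho>) / (1 + norm ?g ^ 2)" by (simp only:)
  then have c: "\<rho> * c = 2 * (x \<bullet> ?g - G x) / (1 + norm ?g ^ 2)" using \<open>0 < \<rho>\<close> by simp
  have k: "- (\<rho> * c) = 2 * (G x - x \<bullet> ?g) / (1 + norm ?g ^ 2)"
    unfolding c minus_divide_left by simp
  have "q = p - \<delta> *\<^sub>R sgn (p - q)" using \<open>0 < \<delta>\<close> by (simp add: \<delta>_def sgn_div_norm)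
  then have "fst q = x - \<delta> *\<^sub>R ((1 / \<rho>) *\<^sub>R x - c *\<^sub>R ?g)"
    unfolding sgn_pq by (simp add: sgn_div_norm p_def \<rho>_def divide_inverse)
  also have "\<dots> = x - (\<delta> / \<rho>) *\<^sub>R (x + (- (\<rho> * c)) *\<^sub>R ?g)"
    using \<open>0 < \<rho>\<close> by (simp add: algebra_simps)
  also have "\<dots> = hmap R G x"
  proof -
    have "sqrt (norm x ^ 2 + G x ^ 2) = \<rho>" by (simp add: \<rho>_def p_def norm_Pair)
    moreover have "\<rho> - R = \<delta>" using \<rho> by simp
    ultimately show ?thesis unfolding hmap_def k by simp
  qed
  finally show ?thesis by simp
qed

lemma equidistant_graph_hmap_x_f:
  fixes f G :: "real^'n \<Rightarrow> real"
  assumes adm: "admissible R f" and "0 < R" and "C2 G"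
    and graph: "equidistant_set (cball 0 R) (epigraph f) = {(x, G x) | x. True}"
    and t: "t \<in> D_f R f"
  shows "y_f R f t = G (x_f R f t)" and "hmap R G (x_f R f t) = t"
proof -
  let ?E = "equidistant_set (cball 0 R) (epigraph f)" and ?q = "(t, f t)"
  define p where "p = (x_f R f t, y_f R f t)"
  have "p \<in> ?E" using x_f_y_f_mem_equidistant_set[OF adm \<open>0 < R\<close> t] by (simp add: p_def)
  then show y: "y_f R f t = G (x_f R f t)" using graph by (auto simp: p_def)
  have "?q \<in> epigraph f" by (simp add: epigraph_def)
  have below: "norm z - norm (z - ?q) \<le> R" if "z \<in> ?E" for z
  proof -
    have "norm z - R \<le> infdist z (cball 0 R)" using \<open>0 < R\<close> by (simp add: infdist_cball_zero)
    also have "\<dots> = infdist z (epigraph f)" using that by (simp add: equidistant_set_def)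
    also have "\<dots> \<le> dist z ?q" using \<open>?q \<in> epigraph f\<close> by (rule infdist_le)
    finally show ?thesis by (simp add: dist_norm)
  qed
  have "convex_on UNIV f" and "C2 f" using adm by (auto simp: admissible_def)
  from infdist_epigraph_normal_ray[OF this(1) C2_has_derivative_grad[OF this(2)]
      less_imp_le[OF mu_f_pos[OF adm t]]]
  have "infdist p (epigraph f) = dist p ?q" by (simp add: p_def x_f_y_f_eq_normal_ray)
  moreover have "p \<noteq> ?q"
    using equidistant_set_disjoint_epigraph[OF adm \<open>0 < R\<close> \<open>p \<in> ?E\<close>] \<open>?q \<in> epigraph f\<close> by auto
  ultimately have "max 0 (norm p - R) = dist p ?q" and "0 < dist p ?q"
    using \<open>p \<in> ?E\<close> \<open>0 < R\<close> by (simp_all add: equidistant_set_def infdist_cball_zero)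
  then have "norm p - norm (p - ?q) = R" by (simp add: dist_norm max_def split: if_splits)
  then show "hmap R G (x_f R f t) = t"
    using hmap_eq_at_hyperboloid_contact[OF \<open>0 < R\<close> _ _ below] graph y
      admissible_epigraph_norm_gt[OF adm \<open>?q \<in> epigraph f\<close>] \<open>C2 G\<close>
    by (auto simp: p_def C2_def)
qed

lemma equidistant_graph_D_f_eq_range_hmap:
  fixes f G :: "real^'n \<Rightarrow> real"
  assumes adm: "admissible R f" and "0 < R" and "C2 G"
    and graph: "equidistant_set (cball 0 R) (epigraph f) = {(x, G x) | x. True}"
  shows "D_f R f = range (hmap R G)"
proof (intro equalityI subsetI)
  note hmap_x_f = equidistant_graph_hmap_x_f(2)[OF assms]
  fix t assume "t \<in> range (hmap R G)"
  then obtain x where "t = hmap R G x" by blast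
  moreover obtain s where "s \<in> D_f R f" and "(x, G x) = (x_f R f s, y_f R f s)"
    using graph equidistant_set_eq_image_x_f_y_f[OF adm \<open>0 < R\<close>] by blast
  ultimately show "t \<in> D_f R f" using hmap_x_f by simp
qed (metis equidistant_graph_hmap_x_f(2)[OF assms] rangeI)

theorem theorem12:
  fixes R :: real and G :: "real^'n \<Rightarrow> real" and J :: "(real^'n) set"
  assumes R: "R > 0"
    and G_C2: "C2 G"
    and G_pos: "\<forall>x. norm x ^ 2 + G x ^ 2 > 0"
    and h_bij: "bij_betw (hmap R G) UNIV J"
    and J_open: "open J" and J0: "0 \<in> J"
    and h_jac: "\<forall>x. \<exists>h'. (hmap R G has_derivative h') (at x) \<and> det (matrix h') \<noteq> 0"
  shows "(\<exists>f. admissible R f \<and>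
            equidistant_set (cball 0 R) (epigraph f) = {(x, G x) | x. True})
     \<longleftrightarrow> (\<exists>f. admissible R f \<and> D_f R f = J \<and>
            (\<forall>t\<in>J. x_f R f t = inv (hmap R G) t \<and> y_f R f t = G (inv (hmap R G) t)))"
proof -
  let ?h = "hmap R G"
  have inj: "inj ?h" and J: "J = range ?h" using h_bij by (auto simp: bij_betw_def)
  show ?thesis
  proof
    assume "\<exists>f. admissible R f \<and> equidistant_set (cball 0 R) (epigraph f) = {(x, G x) | x. True}"
    then obtain f where adm: "admissible R f"
      and graph: "equidistant_set (cball 0 R) (epigraph f) = {(x, G x) | x. True}" by blast
    note on_graph = equidistant_graph_hmap_x_f[OF adm R G_C2 graph]
    have "D_f R f = J" using equidistant_graph_D_f_eq_range_hmap[OF adm R G_C2 graph] J by simp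
    moreover have "x_f R f t = inv ?h t" if "t \<in> J" for t
      using on_graph(2) inv_f_f[OF inj] that \<open>D_f R f = J\<close> by metis
    ultimately show "\<exists>f. admissible R f \<and> D_f R f = J \<and>
        (\<forall>t\<in>J. x_f R f t = inv ?h t \<and> y_f R f t = G (inv ?h t))"
      using adm on_graph(1) by auto
  next
    assume "\<exists>f. admissible R f \<and> D_f R f = J \<and>
        (\<forall>t\<in>J. x_f R f t = inv ?h t \<and> y_f R f t = G (inv ?h t))"
    then obtain f where adm: "admissible R f" and D: "D_f R f = J"
      and param: "\<forall>t\<in>J. x_f R f t = inv ?h t \<and> y_f R f t = G (inv ?h t)" by blast
    have "equidistant_set (cball 0 R) (epigraph f) = (\<lambda>x. (x, G x)) ` (inv ?h ` J)"
      using param by (auto simp: equidistant_set_eq_image_x_f_y_f[OF adm R] D image_iff)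
    also have "inv ?h ` J = UNIV"
      using bij_betw_imp_surj_on[OF bij_betw_inv_into[OF h_bij]] by simp
    finally show "\<exists>f. admissible R f \<and>
        equidistant_set (cball 0 R) (epigraph f) = {(x, G x) | x. True}"
      using adm by auto
  qed
qed

end
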